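(* Let $f(x|\eta)$, $\eta=(\theta,v,m)$, be the skew-normal kernel and let $\eta_1,\dots,\eta_{k_0}$ be distinct parameters with $v_j=\sigma_j^2>0$. The $4k_0$ functions $$\Big\{f(\cdot|\eta_j),\ \frac{\partial f}{\partial\theta}(\cdot|\eta_j),\ \frac{\partial f}{\partial v}(\cdot|\eta_j),\ \frac{\partial f}{\partial m}(\cdot|\eta_j):\ j=1,\dots,k_0\Big\}$$ are linearly dependent (as functions of $x\in\mathbb{R}$, almost everywhere) if and only if $P_1(\eta_1,\dots,\eta_{k_0})=0$ or $P_2(\eta_1,\dots,\eta_{k_0})=0$, where $$P_1=\prod_{j=1}^{k_0}m_j,\qquad P_2=\prod_{1\le i\neq j\le k_0}\Big\{(\theta_i-\theta_j)^2+\big[\sigma_i^2(1+m_j^2)-\sigma_j^2(1+m_i^2)\big]^2\Big\}.$$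
   Context: Skew-normal kernel: $f(x|\theta,v,m)=\frac{2}{\sigma}\varphi\!\left(\frac{x-\theta}{\sigma}\right)\Phi\!\left(\frac{m(x-\theta)}{\sigma}\right)$ with $\sigma=\sqrt v$, $\varphi,\Phi$ the standard normal density and cdf. An empty product equals $1$. *)

theory Defs
  imports "HOL-Probability.Probability"
begin

definition std_normal_cdf :: "real \<Rightarrow> real" where
  "std_normal_cdf z = (LBINT t:{..z}. std_normal_density t)"

definition skew_normal :: "real \<Rightarrow> real \<Rightarrow> real \<Rightarrow> real \<Rightarrow> real" where
  "skew_normal x \<theta> v m =
     2 / sqrt v * std_normal_density ((x - \<theta>) / sqrt v) * std_normal_cdf (m * (x - \<theta>) / sqrt v)"

definition dsn_theta :: "real \<Rightarrow> real \<Rightarrow> real \<Rightarrow> real \<Rightarrow> real" where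
  "dsn_theta x \<theta> v m = deriv (\<lambda>t. skew_normal x t v m) \<theta>"

definition dsn_v :: "real \<Rightarrow> real \<Rightarrow> real \<Rightarrow> real \<Rightarrow> real" where
  "dsn_v x \<theta> v m = deriv (\<lambda>w. skew_normal x \<theta> w m) v"

definition dsn_m :: "real \<Rightarrow> real \<Rightarrow> real \<Rightarrow> real \<Rightarrow> real" where
  "dsn_m x \<theta> v m = deriv (\<lambda>n. skew_normal x \<theta> v n) m"

end

theory Submission
  imports Defs "HOL-Real_Asymp.Real_Asymp" "HOL-Computational_Algebra.Polynomial"
begin

(*
  Write t = x - theta and sigma = sqrt v. Every combination a f + b df/dtheta + c df/dv + d df/dm is
  A(t) Phi(m t/sigma) phi(t/sigma) + B(t) phi(t/sigma) phi(m t/sigma) with polynomials A, B whose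
  coefficients determine a, b, c, d; the last product is a Gaussian kernel of variance v/(1 + m^2).
  For m = 0 the derivatives in theta and m are proportional, and two indices with equal theta and
  v/(1 + m^2) have proportional derivatives in m: this is the dependence when P1 or P2 vanishes.
  Conversely, if every m is nonzero, the Mills ratio R(y) = (1 - Phi y)/phi y rewrites
  Phi(m t/sigma) phi(t/sigma) as a multiple of the kernel of variance v plus R(|m| t/sigma) times the
  kernel of variance v/(1 + m^2). As x -> infinity Gaussian kernels ordered by (variance, centre)
  dominate each other by more than any power of x. Dividing a vanishing combination by the dominant
  kernel and inserting R(y) = 1/y - 1/y^3 + 3/y^5 + o(y^-5) forces the polynomials attached to that
  kernel to vanish, so all coefficients vanish once P2 != 0 makes the kernels distinct.
*)

section \<open>Standard normal distribution function and Mills ratio\<close>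

lemma std_normal_density_has_real_derivative:
  "(std_normal_density has_real_derivative - x * std_normal_density x) (at x)"
  unfolding std_normal_density_def
  by (auto intro!: derivative_eq_intros simp: power2_eq_square field_simps)

lemma set_integrable_std_normal_density:
  "A \<in> sets lborel \<Longrightarrow> set_integrable lborel A std_normal_density"
  unfolding set_integrable_def by (intro integrable_mult_indicator integrable_normal_density) auto

lemma std_normal_cdf_eq_interval_integral:
  "std_normal_cdf z = std_normal_cdf 0 + (LBINT t=0..z. std_normal_density t)"
proof (cases "0 \<le> z")
  case True
  then have "{..z} = {..0} \<union> {0<..z}" by auto
  then have "std_normal_cdf z = (LBINT t:{..0} \<union> {0<..z}. std_normal_density t)"
    unfolding std_normal_cdf_def by simp
  also have "\<dots> = std_normal_cdf 0 + (LBINT t:{0<..z}. std_normal_density t)"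
    unfolding std_normal_cdf_def by (rule set_integral_Un) (auto intro!: set_integrable_std_normal_density)
  finally show ?thesis
    using True by (simp add: interval_integral_Ioc[of 0, simplified zero_ereal_def[symmetric]])
next
  case False
  then have "{..0} = {..z} \<union> {z<..0::real}" by auto
  then have "std_normal_cdf 0 = (LBINT t:{..z} \<union> {z<..0}. std_normal_density t)"
    unfolding std_normal_cdf_def by simp
  also have "\<dots> = std_normal_cdf z + (LBINT t:{z<..0}. std_normal_density t)"
    unfolding std_normal_cdf_def by (rule set_integral_Un) (auto intro!: set_integrable_std_normal_density)
  finally show ?thesis
    using False by (subst interval_integral_endpoints_reverse)
      (simp add: interval_integral_Ioc[of _ 0, simplified zero_ereal_def[symmetric]])
qed

lemma std_normal_cdf_has_real_derivative:
  "(std_normal_cdf has_real_derivative std_normal_density x) (at x)"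
proof -
  let ?F = "\<lambda>z. LBINT t=0..z. std_normal_density t"
  define a b where "a = min 0 x - 1" and "b = max 0 x + 1"
  have "continuous_on {a..b} std_normal_density"
    unfolding std_normal_density_def by (intro continuous_intros) auto
  then have "(?F has_vector_derivative std_normal_density x) (at x within {a..b})"
    using interval_integral_FTC2[of a 0 b std_normal_density x] by (auto simp: a_def b_def zero_ereal_def)
  then have "(?F has_vector_derivative std_normal_density x) (at x within {a<..<b})"
    by (rule has_vector_derivative_within_subset) auto
  then have "(?F has_real_derivative std_normal_density x) (at x)"
    by (subst (asm) has_vector_derivative_within_open)
      (auto simp: a_def b_def has_real_derivative_iff_has_vector_derivative)
  then have "((\<lambda>z. std_normal_cdf 0 + ?F z) has_real_derivative std_normal_density x) (at x)"
    by (auto intro!: derivative_eq_intros)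
  then show ?thesis
    by (subst (asm) std_normal_cdf_eq_interval_integral[symmetric])
qed

lemma tendsto_std_normal_cdf_at_bot: "(std_normal_cdf \<longlongrightarrow> 0) at_bot"
proof -
  have "((\<lambda>a. std_normal_cdf 0 - (LBINT t:{a..0}. std_normal_density t))
          \<longlongrightarrow> std_normal_cdf 0 - (LBINT t:{..0}. std_normal_density t)) at_bot"
    by (intro tendsto_intros tendsto_set_lebesgue_integral_at_bot set_integrable_std_normal_density) auto
  moreover have "\<forall>\<^sub>F a in at_bot. std_normal_cdf 0 - (LBINT t:{a..0}. std_normal_density t) = std_normal_cdf a"
    using eventually_le_at_bot[of 0]
    by eventually_elim
      (subst (2) std_normal_cdf_eq_interval_integral, subst interval_integral_endpoints_reverse,
       simp add: interval_integral_Icc[of _ 0, simplified zero_ereal_def[symmetric]])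
  ultimately show ?thesis
    by (simp add: std_normal_cdf_def Lim_transform_eventually)
qed

lemma std_normal_cdf_0_plus_upper_half: "std_normal_cdf 0 + (LBINT t:{0..}. std_normal_density t) = 1"
proof -
  have "(LBINT t:{0..}. std_normal_density t) = (LBINT t:{0<..}. std_normal_density t)"
    using AE_lborel_singleton[of 0]
    by (intro set_integral_cong_set) (auto simp: set_borel_measurable_def elim!: eventually_mono)
  moreover have "std_normal_cdf 0 + (LBINT t:{0<..}. std_normal_density t) = (LBINT t:{..0} \<union> {0<..}. std_normal_density t)"
    unfolding std_normal_cdf_def by (rule set_integral_Un[symmetric]) (auto intro!: set_integrable_std_normal_density)
  moreover have "{..0::real} \<union> {0<..} = UNIV" by auto
  ultimately show ?thesis by (simp add: set_lebesgue_integral_def)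
qed

lemma tendsto_std_normal_cdf_at_top: "(std_normal_cdf \<longlongrightarrow> 1) at_top"
proof -
  have "((\<lambda>b. std_normal_cdf 0 + (LBINT t:{0..b}. std_normal_density t))
          \<longlongrightarrow> std_normal_cdf 0 + (LBINT t:{0..}. std_normal_density t)) at_top"
    by (intro tendsto_intros tendsto_set_lebesgue_integral_at_top set_integrable_std_normal_density) auto
  moreover have "\<forall>\<^sub>F b in at_top. std_normal_cdf 0 + (LBINT t:{0..b}. std_normal_density t) = std_normal_cdf b"
    using eventually_ge_at_top[of 0]
    by eventually_elim
      (subst std_normal_cdf_eq_interval_integral, simp add: interval_integral_Icc[of 0, simplified zero_ereal_def[symmetric]])
  ultimately show ?thesis
    unfolding std_normal_cdf_0_plus_upper_half by (rule Lim_transform_eventually)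
qed

lemma std_normal_cdf_minus: "std_normal_cdf (- y) = 1 - std_normal_cdf y"
proof -
  define h where "h y = std_normal_cdf y + std_normal_cdf (- y)" for y
  have "(h has_real_derivative 0) (at y)" for y
    unfolding h_def
    by (auto intro!: derivative_eq_intros DERIV_chain2[OF std_normal_cdf_has_real_derivative]
        simp: std_normal_density_def)
  then have const: "h y = h 0" for y
    by (metis DERIV_isconst_all)
  have "(h \<longlongrightarrow> 1 + 0) at_top"
    unfolding h_def
    by (intro tendsto_add tendsto_std_normal_cdf_at_top
        filterlim_compose[OF tendsto_std_normal_cdf_at_bot filterlim_uminus_at_bot_at_top])
  moreover have "(h \<longlongrightarrow> h 0) at_top"
    using const by (simp add: tendsto_eventually)
  ultimately have "h 0 = 1"
    using tendsto_unique[OF trivial_limit_at_top_linorder] by fastforce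
  then show ?thesis
    using const[of y] by (simp add: h_def)
qed

lemma nonneg_if_deriv_nonpos_tendsto_zero:
  fixes h h' :: "real \<Rightarrow> real"
  assumes deriv: "\<And>t. t \<ge> y \<Longrightarrow> (h has_real_derivative h' t) (at t)"
    and nonpos: "\<And>t. t \<ge> y \<Longrightarrow> h' t \<le> 0"
    and lim: "(h \<longlongrightarrow> 0) at_top"
  shows "0 \<le> h y"
proof -
  have "\<forall>\<^sub>F t in at_top. h t \<le> h y"
    using eventually_ge_at_top[of y]
  proof eventually_elim
    case (elim t)
    show ?case
      by (rule DERIV_nonpos_imp_nonincreasing[OF elim]) (use deriv nonpos in auto)
  qed
  with lim show ?thesis
    by (rule tendsto_upperbound) simp
qed

lemma std_normal_tail_upper:
  assumes "y > 0"
  shows "1 - std_normal_cdf y \<le> std_normal_density y * (1/y - 1/y^3 + 3/y^5)"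
proof -
  define h where "h t = std_normal_density t * (1/t - 1/t^3 + 3/t^5) - (1 - std_normal_cdf t)" for t
  have "(h has_real_derivative - 15 * std_normal_density t / t^6) (at t)" if "t \<ge> y" for t
    unfolding h_def using that assms
    by (auto intro!: derivative_eq_intros std_normal_density_has_real_derivative
        std_normal_cdf_has_real_derivative simp: field_simps eval_nat_numeral)
  moreover have "((\<lambda>t. std_normal_density t * (1/t - 1/t^3 + 3/t^5)) \<longlongrightarrow> 0) at_top"
    unfolding std_normal_density_def by real_asymp
  then have "(h \<longlongrightarrow> 0 - (1 - 1)) at_top"
    unfolding h_def by (intro tendsto_intros tendsto_std_normal_cdf_at_top)
  ultimately have "0 \<le> h y"
    by (intro nonneg_if_deriv_nonpos_tendsto_zero) (auto intro: less_imp_le)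
  then show ?thesis
    by (simp add: h_def)
qed

lemma std_normal_tail_lower:
  assumes "y > 0"
  shows "std_normal_density y * (1/y - 1/y^3 + 3/y^5 - 15/y^7) \<le> 1 - std_normal_cdf y"
proof -
  define h where "h t = (1 - std_normal_cdf t) - std_normal_density t * (1/t - 1/t^3 + 3/t^5 - 15/t^7)" for t
  have "(h has_real_derivative - 105 * std_normal_density t / t^8) (at t)" if "t \<ge> y" for t
    unfolding h_def using that assms
    by (auto intro!: derivative_eq_intros std_normal_density_has_real_derivative
        std_normal_cdf_has_real_derivative simp: field_simps eval_nat_numeral)
  moreover have "((\<lambda>t. std_normal_density t * (1/t - 1/t^3 + 3/t^5 - 15/t^7)) \<longlongrightarrow> 0) at_top"
    unfolding std_normal_density_def by real_asymp
  then have "(h \<longlongrightarrow> (1 - 1) - 0) at_top"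
    unfolding h_def by (intro tendsto_intros tendsto_std_normal_cdf_at_top)
  ultimately have "0 \<le> h y"
    by (intro nonneg_if_deriv_nonpos_tendsto_zero) (auto intro: less_imp_le)
  then show ?thesis
    by (simp add: h_def)
qed

definition mills_ratio :: "real \<Rightarrow> real" where
  "mills_ratio y = (1 - std_normal_cdf y) / std_normal_density y"

lemma tendsto_mills_ratio_expansion:
  "((\<lambda>y. y^5 * (mills_ratio y - (1/y - 1/y^3 + 3/y^5))) \<longlongrightarrow> 0) at_top"
proof (rule Lim_null_comparison)
  show "\<forall>\<^sub>F y in at_top. norm (y^5 * (mills_ratio y - (1/y - 1/y^3 + 3/y^5))) \<le> 15 / y^2"
    using eventually_gt_at_top[of 0]
  proof eventually_elim
    case (elim y)
    have "0 < std_normal_density y"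
      by (simp add: normal_density_pos)
    then have "1/y - 1/y^3 + 3/y^5 - 15/y^7 \<le> mills_ratio y" "mills_ratio y \<le> 1/y - 1/y^3 + 3/y^5"
      using std_normal_tail_lower[OF elim] std_normal_tail_upper[OF elim]
      by (simp_all add: mills_ratio_def field_simps)
    then have "\<bar>mills_ratio y - (1/y - 1/y^3 + 3/y^5)\<bar> \<le> 15 / y^7"
      by linarith
    then have "y^5 * \<bar>mills_ratio y - (1/y - 1/y^3 + 3/y^5)\<bar> \<le> y^5 * (15 / y^7)"
      using elim by (intro mult_left_mono) auto
    also have "\<dots> = 15 / y^2"
      using elim by (simp add: field_simps eval_nat_numeral)
    finally show ?case
      using elim by (simp add: abs_mult)
  qed
  show "((\<lambda>y::real. 15 / y^2) \<longlongrightarrow> 0) at_top"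
    by real_asymp
qed

section \<open>Asymptotic uniqueness of Gaussian and Mills expansions\<close>

lemma poly_eq_0_if_tendsto_0:
  fixes p :: "real poly"
  assumes lim: "(poly p \<longlongrightarrow> 0) at_top"
  shows "p = 0"
proof (cases "degree p = 0")
  case True
  then obtain c where p: "p = [:c:]"
    by (metis degree_eq_zeroE)
  then have "poly p = (\<lambda>_. c)"
    by auto
  with lim have "((\<lambda>_::real. c) \<longlongrightarrow> 0) at_top"
    by simp
  then show ?thesis
    using p by (simp add: tendsto_const_iff)
next
  case False
  then have "filterlim (poly p) at_infinity at_top"
    using filterlim_poly_at_infinity filterlim_mono at_top_le_at_infinity by blast
  with lim show ?thesis
    using not_tendsto_and_filterlim_at_infinity[OF trivial_limit_at_top_linorder] by blast
qed

lemma poly_degree_le_2_eq: "degree Q \<le> 2 \<Longrightarrow> Q = [:coeff Q 0, coeff Q 1, coeff Q 2:]"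
  by (auto simp: poly_eq_iff coeff_pCons coeff_eq_0 numeral_2_eq_2 split: nat.split)

lemma mills_expansion_unique:
  fixes C Q :: "real poly" and \<rho> r :: "real \<Rightarrow> real"
  assumes \<rho>: "((\<lambda>y. y^5 * (\<rho> y - (1/y - 1/y^3 + 3/y^5))) \<longlongrightarrow> 0) at_top"
    and deg: "degree Q \<le> 2"
    and r: "((\<lambda>y. y^3 * r y) \<longlongrightarrow> 0) at_top"
    and eq: "\<forall>\<^sub>F y in at_top. poly C y + poly Q y * \<rho> y + r y = 0"
  shows "C = 0 \<and> Q = 0"
proof -
  define q0 q1 q2 where "q0 = coeff Q 0" and "q1 = coeff Q 1" and "q2 = coeff Q 2"
  have Q: "Q = [:q0, q1, q2:]"
    unfolding q0_def q1_def q2_def using deg by (rule poly_degree_le_2_eq)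
  define P where "P = monom 1 3 * C + [:3 * q2 - q0, - q1, q0 - q2, q1, q2:]"
  define R where "R y = 3 * q1 * (1 / y) + 3 * q0 * (1 / y^2)
      + (q2 + q1 * (1 / y) + q0 * (1 / y^2)) * (y^5 * (\<rho> y - (1/y - 1/y^3 + 3/y^5))) + y^3 * r y" for y
  \<comment> \<open>multiplying by \<open>y^3\<close> turns the expansion of \<open>\<rho>\<close> into a polynomial plus a vanishing remainder\<close>
  have expand: "y^3 * (poly C y + poly Q y * \<rho> y + r y) = poly P y + R y" if "y > 0" for y
    unfolding P_def R_def Q using that
    by (simp add: poly_monom field_simps) (simp add: algebra_simps eval_nat_numeral)
  have "\<forall>\<^sub>F y in at_top. poly P y = - R y"
    using eq eventually_gt_at_top[of 0]
  proof eventually_elim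
    case (elim y)
    with expand[of y] show ?case
      by simp
  qed
  moreover have "((\<lambda>y. - R y) \<longlongrightarrow> - (3 * q1 * 0 + 3 * q0 * 0 + (q2 + q1 * 0 + q0 * 0) * 0 + 0)) at_top"
  proof -
    have "((\<lambda>y::real. 1 / y) \<longlongrightarrow> 0) at_top" "((\<lambda>y::real. 1 / y^2) \<longlongrightarrow> 0) at_top"
      by real_asymp+
    then show ?thesis
      unfolding R_def by (intro tendsto_intros \<rho> r)
  qed
  ultimately have "(poly P \<longlongrightarrow> 0) at_top"
    by (simp add: tendsto_cong)
  then have P: "P = 0"
    by (rule poly_eq_0_if_tendsto_0)
  have "coeff P 0 = 0" "coeff P 1 = 0" "coeff P 2 = 0"
    by (simp_all add: P)
  then have "q0 = 0 \<and> q1 = 0 \<and> q2 = 0"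
    unfolding P_def by (simp add: coeff_monom_mult numeral_2_eq_2)
  moreover from this have "monom 1 3 * C = 0"
    using P unfolding P_def by simp
  ultimately show ?thesis
    unfolding Q by simp
qed

definition gauss_kernel :: "real \<times> real \<Rightarrow> real \<Rightarrow> real" where
  "gauss_kernel p x = exp (- ((x - snd p)^2) / (2 * fst p))"

definition kernel_less :: "real \<times> real \<Rightarrow> real \<times> real \<Rightarrow> bool" where
  "kernel_less p q \<longleftrightarrow> fst p < fst q \<or> (fst p = fst q \<and> snd p < snd q)"

lemma gauss_kernel_pos: "gauss_kernel p x > 0"
  by (simp add: gauss_kernel_def)

lemma tendsto_gauss_kernel_ratio:
  assumes p: "0 < fst p" and q: "0 < fst q" and less: "kernel_less p q"
  shows "((\<lambda>x. x^n * (gauss_kernel p x / gauss_kernel q x)) \<longlongrightarrow> 0) at_top"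
proof -
  obtain w t W T where pq: "p = (w, t)" "q = (W, T)"
    by fastforce
  have w: "w > 0" and W: "W > 0"
    using p q pq by auto
  have ratio: "gauss_kernel p x / gauss_kernel q x = exp (- ((x - t)^2) / (2 * w) + (x - T)^2 / (2 * W))" for x
    unfolding gauss_kernel_def pq by (simp add: exp_diff[symmetric])
  show ?thesis
  proof (cases "w < W")
    case True
    define c d e where "c = (W - w) / (2 * w * W)" and "d = t / w - T / W"
      and "e = T^2 / (2 * W) - t^2 / (2 * w)"
    have "c > 0"
      unfolding c_def using True w by simp
    moreover have "- ((x - t)^2) / (2 * w) + (x - T)^2 / (2 * W) = - c * x^2 + d * x + e" for x
      unfolding c_def d_def e_def using w W by (simp add: field_simps power2_eq_square)
    ultimately show ?thesis
      unfolding ratio by simp real_asymp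
  next
    case False
    with less pq have "w = W" "t < T"
      by (auto simp: kernel_less_def)
    define c e where "c = (T - t) / W" and "e = (T^2 - t^2) / (2 * W)"
    have "c > 0"
      unfolding c_def using \<open>t < T\<close> W by simp
    moreover have "- ((x - t)^2) / (2 * w) + (x - T)^2 / (2 * W) = - c * x + e" for x
      unfolding c_def e_def using W \<open>w = W\<close> by (simp add: field_simps power2_eq_square)
    ultimately show ?thesis
      unfolding ratio by simp real_asymp
  qed
qed

lemma tendsto_poly_gauss_kernel_ratio:
  assumes "0 < fst p" "0 < fst q" "kernel_less p q"
  shows "((\<lambda>x. x^n * poly C x * (gauss_kernel p x / gauss_kernel q x)) \<longlongrightarrow> 0) at_top"
proof (induction C arbitrary: n)
  case 0
  show ?case
    by simp
next
  case (pCons a C)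
  have "((\<lambda>x. a * (x^n * (gauss_kernel p x / gauss_kernel q x))
              + x^Suc n * poly C x * (gauss_kernel p x / gauss_kernel q x)) \<longlongrightarrow> a * 0 + 0) at_top"
    by (intro tendsto_intros tendsto_gauss_kernel_ratio assms pCons.IH)
  then show ?case
    by (simp add: algebra_simps)
qed

definition mills_term :: "(real \<Rightarrow> real) \<Rightarrow> real poly \<Rightarrow> real \<Rightarrow> real \<times> real \<Rightarrow> real \<Rightarrow> real" where
  "mills_term \<rho> Q \<alpha> p x = poly Q (x - snd p) * \<rho> (\<alpha> * (x - snd p)) * gauss_kernel p x"

lemma tendsto_zero_if_mills_expansion:
  fixes \<rho> :: "real \<Rightarrow> real"
  assumes "((\<lambda>y. y^5 * (\<rho> y - (1/y - 1/y^3 + 3/y^5))) \<longlongrightarrow> 0) at_top"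
  shows "(\<rho> \<longlongrightarrow> 0) at_top"
proof -
  have "((\<lambda>y. (1/y - 1/y^3 + 3/y^5) + 1/y^5 * (y^5 * (\<rho> y - (1/y - 1/y^3 + 3/y^5)))) \<longlongrightarrow> 0 + 0 * 0) at_top"
    by (intro tendsto_intros assms) real_asymp+
  moreover have "\<forall>\<^sub>F y in at_top. (1/y - 1/y^3 + 3/y^5) + 1/y^5 * (y^5 * (\<rho> y - (1/y - 1/y^3 + 3/y^5))) = \<rho> y"
    using eventually_gt_at_top[of 0] by eventually_elim simp
  ultimately show ?thesis
    by (simp add: tendsto_cong)
qed

lemma tendsto_mills_term_ratio:
  assumes "0 < fst p" "0 < fst q" "kernel_less p q" and "\<alpha> > 0" and \<rho>: "(\<rho> \<longlongrightarrow> 0) at_top"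
  shows "((\<lambda>x. x^3 * (mills_term \<rho> Q \<alpha> p x / gauss_kernel q x)) \<longlongrightarrow> 0) at_top"
proof -
  have "filterlim (\<lambda>x. \<alpha> * (x - snd p)) at_top at_top"
    using \<open>\<alpha> > 0\<close> by real_asymp
  then have "((\<lambda>x. x^3 * poly (pcompose Q [:- snd p, 1:]) x * (gauss_kernel p x / gauss_kernel q x)
               * \<rho> (\<alpha> * (x - snd p))) \<longlongrightarrow> 0 * 0) at_top"
    by (intro tendsto_mult tendsto_poly_gauss_kernel_ratio assms filterlim_compose[OF \<rho>])
  then show ?thesis
    by (simp add: mills_term_def poly_pcompose mult_ac)
qed

lemma mills_expansion_unique_shifted:
  fixes C Q :: "real poly" and \<rho> r :: "real \<Rightarrow> real"
  assumes \<rho>: "((\<lambda>y. y^5 * (\<rho> y - (1/y - 1/y^3 + 3/y^5))) \<longlongrightarrow> 0) at_top"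
    and deg: "degree Q \<le> 2" and \<alpha>: "\<alpha> > 0"
    and r: "((\<lambda>x. x^3 * r x) \<longlongrightarrow> 0) at_top"
    and eq: "\<forall>\<^sub>F x in at_top. poly C x + poly Q (x - \<theta>) * \<rho> (\<alpha> * (x - \<theta>)) + r x = 0"
  shows "C = 0 \<and> Q = 0"
proof -
  define x where "x y = \<theta> + y / \<alpha>" for y
  have x: "filterlim x at_top at_top"
    unfolding x_def using \<alpha> by real_asymp
  have "((\<lambda>y. (y / x y)^3 * (x y^3 * r (x y))) \<longlongrightarrow> \<alpha>^3 * 0) at_top"
  proof (intro tendsto_mult tendsto_power filterlim_compose[OF r x])
    show "((\<lambda>y. y / x y) \<longlongrightarrow> \<alpha>) at_top"
      unfolding x_def using \<alpha> by real_asymp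
  qed
  moreover have "\<forall>\<^sub>F y in at_top. (y / x y)^3 * (x y^3 * r (x y)) = y^3 * r (x y)"
    using filterlim_at_top_dense[THEN iffD1, OF x, rule_format, of 0]
    by eventually_elim (simp add: power_divide)
  ultimately have r': "((\<lambda>y. y^3 * r (x y)) \<longlongrightarrow> 0) at_top"
    by (simp add: tendsto_cong)
  have "\<forall>\<^sub>F y in at_top. poly C (x y) + poly Q (x y - \<theta>) * \<rho> (\<alpha> * (x y - \<theta>)) + r (x y) = 0"
    using eq x by (rule eventually_compose_filterlim)
  then have "\<forall>\<^sub>F y in at_top. poly (pcompose C [:\<theta>, 1 / \<alpha>:]) y + poly (pcompose Q [:0, 1 / \<alpha>:]) y * \<rho> y
      + r (x y) = 0"
    using \<alpha> by (simp add: x_def poly_pcompose field_simps)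
  moreover have "degree (pcompose Q [:0, 1 / \<alpha>:]) \<le> 2"
    using deg \<alpha> by (simp add: degree_pcompose)
  ultimately have "pcompose C [:\<theta>, 1 / \<alpha>:] = 0 \<and> pcompose Q [:0, 1 / \<alpha>:] = 0"
    using mills_expansion_unique[OF \<rho> _ r'] by blast
  then show ?thesis
    using \<alpha> by (auto dest!: pcompose_eq_0)
qed

lemma kernel_less_trans: "kernel_less p q \<Longrightarrow> kernel_less q r \<Longrightarrow> kernel_less p r"
  by (auto simp: kernel_less_def)

lemma kernel_less_linear: "p \<noteq> q \<Longrightarrow> kernel_less p q \<or> kernel_less q p"
  by (auto simp: kernel_less_def prod_eq_iff)

lemma finite_kernel_less_greatest:
  assumes "finite D" "D \<noteq> {}"
  shows "\<exists>q\<in>D. \<forall>p\<in>D. p \<noteq> q \<longrightarrow> kernel_less p q"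
  using assms
proof (induction rule: finite_ne_induct)
  case (insert x F)
  then obtain q where "q \<in> F" and q: "\<forall>p\<in>F. p \<noteq> q \<longrightarrow> kernel_less p q"
    by blast
  show ?case
  proof (cases "kernel_less q x")
    case True
    with q show ?thesis
      by (metis insertCI insertE kernel_less_trans)
  next
    case False
    with q \<open>q \<in> F\<close> \<open>x \<notin> F\<close> show ?thesis
      by (metis insertCI insertE kernel_less_linear)
  qed
qed simp

lemma tendsto_lower_kernel_terms:
  assumes "finite S" "finite J" and q: "0 < fst q"
    and S: "\<And>p. p \<in> S \<Longrightarrow> C p \<noteq> 0 \<Longrightarrow> 0 < fst p \<and> kernel_less p q"
    and J: "\<And>j. j \<in> J \<Longrightarrow> Q j \<noteq> 0 \<Longrightarrow> 0 < fst (u j) \<and> kernel_less (u j) q \<and> \<alpha> j > 0"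
    and \<rho>: "(\<rho> \<longlongrightarrow> 0) at_top"
  shows "((\<lambda>x. x^3 * (((\<Sum>p\<in>S. poly (C p) x * gauss_kernel p x)
                         + (\<Sum>j\<in>J. mills_term \<rho> (Q j) (\<alpha> j) (u j) x)) / gauss_kernel q x)) \<longlongrightarrow> 0) at_top"
proof -
  have "((\<lambda>x. (\<Sum>p\<in>S. x^3 * poly (C p) x * (gauss_kernel p x / gauss_kernel q x))
             + (\<Sum>j\<in>J. x^3 * (mills_term \<rho> (Q j) (\<alpha> j) (u j) x / gauss_kernel q x))) \<longlongrightarrow> 0 + 0) at_top"
  proof (intro tendsto_add tendsto_null_sum)
    fix p assume "p \<in> S"
    show "((\<lambda>x. x^3 * poly (C p) x * (gauss_kernel p x / gauss_kernel q x)) \<longlongrightarrow> 0) at_top"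
    proof (cases "C p = 0")
      case False
      with S[OF \<open>p \<in> S\<close>] q show ?thesis
        by (intro tendsto_poly_gauss_kernel_ratio) auto
    qed simp
  next
    fix j assume "j \<in> J"
    show "((\<lambda>x. x^3 * (mills_term \<rho> (Q j) (\<alpha> j) (u j) x / gauss_kernel q x)) \<longlongrightarrow> 0) at_top"
    proof (cases "Q j = 0")
      case False
      with J[OF \<open>j \<in> J\<close>] q \<rho> show ?thesis
        by (intro tendsto_mills_term_ratio) auto
    qed (simp add: mills_term_def)
  qed
  then show ?thesis
    by (simp add: add_divide_distrib sum_divide_distrib sum_distrib_left distrib_left mult.assoc)
qed

lemma sum_mills_term_split:
  assumes fin: "finite J" and inj: "inj_on u J" and J: "\<forall>j\<in>J. \<alpha> j > 0 \<and> degree (Q j) \<le> 2"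
  obtains Qq \<alpha>q J' where "J' \<subseteq> J" "\<forall>j\<in>J'. u j \<noteq> q" "degree Qq \<le> 2" "\<alpha>q > 0"
    "q \<in> u ` {j\<in>J. Q j \<noteq> 0} \<Longrightarrow> Qq \<noteq> 0"
    "\<And>x. (\<Sum>j\<in>J. mills_term \<rho> (Q j) (\<alpha> j) (u j) x)
            = mills_term \<rho> Qq \<alpha>q q x + (\<Sum>j\<in>J'. mills_term \<rho> (Q j) (\<alpha> j) (u j) x)"
proof (cases "\<exists>j\<in>J. u j = q")
  case True
  then obtain j0 where "j0 \<in> J" "u j0 = q"
    by blast
  with inj J show ?thesis
    by (intro that[of "J - {j0}" "Q j0" "\<alpha> j0"]) (auto simp: sum.remove[OF fin] inj_on_eq_iff)
next
  case False
  then show ?thesis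
    by (intro that[of J 0 1]) (auto simp: mills_term_def)
qed

lemma gauss_mills_combination_unique:
  fixes S :: "(real \<times> real) set" and C :: "real \<times> real \<Rightarrow> real poly"
    and J :: "'j set" and u :: "'j \<Rightarrow> real \<times> real" and Q :: "'j \<Rightarrow> real poly" and \<alpha> :: "'j \<Rightarrow> real"
  assumes fin: "finite S" "finite J" and S: "\<forall>p\<in>S. 0 < fst p"
    and J: "\<forall>j\<in>J. 0 < fst (u j) \<and> \<alpha> j > 0 \<and> degree (Q j) \<le> 2" and inj: "inj_on u J"
    and \<rho>: "((\<lambda>y. y^5 * (\<rho> y - (1/y - 1/y^3 + 3/y^5))) \<longlongrightarrow> 0) at_top"
    and zero: "\<forall>\<^sub>F x in at_top. (\<Sum>p\<in>S. poly (C p) x * gauss_kernel p x)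
                                + (\<Sum>j\<in>J. mills_term \<rho> (Q j) (\<alpha> j) (u j) x) = 0"
  shows "(\<forall>p\<in>S. C p = 0) \<and> (\<forall>j\<in>J. Q j = 0)"
proof (rule ccontr)
  assume nonzero: "\<not> ((\<forall>p\<in>S. C p = 0) \<and> (\<forall>j\<in>J. Q j = 0))"
  define D where "D = {p\<in>S. C p \<noteq> 0} \<union> u ` {j\<in>J. Q j \<noteq> 0}"
  have "finite D" "D \<noteq> {}"
    unfolding D_def using fin nonzero by auto
  from finite_kernel_less_greatest[OF this] obtain q
    where "q \<in> D" and greatest: "\<forall>p\<in>D. p \<noteq> q \<longrightarrow> kernel_less p q"
    by blast
  have q: "0 < fst q"
    using \<open>q \<in> D\<close> S J unfolding D_def by auto
  have "\<forall>j\<in>J. \<alpha> j > 0 \<and> degree (Q j) \<le> 2"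
    using J by auto
  then obtain Qq \<alpha>q J' where J': "J' \<subseteq> J" "\<forall>j\<in>J'. u j \<noteq> q" and "degree Qq \<le> 2" "\<alpha>q > 0"
    and Qq: "q \<in> u ` {j\<in>J. Q j \<noteq> 0} \<Longrightarrow> Qq \<noteq> 0"
    and split_J: "\<And>x. (\<Sum>j\<in>J. mills_term \<rho> (Q j) (\<alpha> j) (u j) x)
                    = mills_term \<rho> Qq \<alpha>q q x + (\<Sum>j\<in>J'. mills_term \<rho> (Q j) (\<alpha> j) (u j) x)"
    by (rule sum_mills_term_split[OF fin(2) inj, where q = q and \<rho> = \<rho>]) blast
  define Cq where "Cq = (if q \<in> S then C q else 0)"
  have split_S: "(\<Sum>p\<in>S. poly (C p) x * gauss_kernel p x)
                   = poly Cq x * gauss_kernel q x + (\<Sum>p\<in>S - {q}. poly (C p) x * gauss_kernel p x)" for x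
    unfolding Cq_def using fin(1) by (simp add: sum.remove)
  define r where "r x = ((\<Sum>p\<in>S - {q}. poly (C p) x * gauss_kernel p x)
                         + (\<Sum>j\<in>J'. mills_term \<rho> (Q j) (\<alpha> j) (u j) x)) / gauss_kernel q x" for x
  have "((\<lambda>x. x^3 * r x) \<longlongrightarrow> 0) at_top"
    unfolding r_def
  proof (rule tendsto_lower_kernel_terms)
    show "0 < fst p \<and> kernel_less p q" if "p \<in> S - {q}" "C p \<noteq> 0" for p
      using that S greatest unfolding D_def by auto
    show "0 < fst (u j) \<and> kernel_less (u j) q \<and> \<alpha> j > 0" if "j \<in> J'" "Q j \<noteq> 0" for j
      using that J J' greatest unfolding D_def by blast
  qed (use fin J' q tendsto_zero_if_mills_expansion[OF \<rho>] in \<open>auto intro: finite_subset\<close>)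
  moreover have "\<forall>\<^sub>F x in at_top. poly Cq x + poly Qq (x - snd q) * \<rho> (\<alpha>q * (x - snd q)) + r x = 0"
    using zero
  proof eventually_elim
    case (elim x)
    have "(poly Cq x + poly Qq (x - snd q) * \<rho> (\<alpha>q * (x - snd q)) + r x) * gauss_kernel q x = 0"
      using elim[unfolded split_S split_J] gauss_kernel_pos[of q x]
      by (simp add: r_def mills_term_def field_simps)
    then show ?case
      using gauss_kernel_pos[of q x] by simp
  qed
  ultimately have "Cq = 0 \<and> Qq = 0"
    using mills_expansion_unique_shifted[OF \<rho> \<open>degree Qq \<le> 2\<close> \<open>\<alpha>q > 0\<close>] by blast
  with \<open>q \<in> D\<close> Qq show False
    unfolding D_def Cq_def by auto
qed

section \<open>The skew-normal kernel and its parameter derivatives\<close>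

lemma std_normal_density_scaled:
  assumes "v > 0"
  shows "std_normal_density ((x - \<theta>) / sqrt v) = gauss_kernel (v, \<theta>) x / sqrt (2 * pi)"
  using assms unfolding std_normal_density_def gauss_kernel_def by (simp add: power_divide)

lemma std_normal_density_scaled_product:
  assumes "v > 0"
  shows "std_normal_density ((x - \<theta>) / sqrt v) * std_normal_density (m * (x - \<theta>) / sqrt v)
           = gauss_kernel (v / (1 + m^2), \<theta>) x / (2 * pi)"
proof -
  have "1 + m^2 > 0"
    by (simp add: add_pos_nonneg)
  then have "- (((x - \<theta>) / sqrt v)^2) / 2 + - ((m * (x - \<theta>) / sqrt v)^2) / 2
               = - ((x - \<theta>)^2) / (2 * (v / (1 + m^2)))"
    using assms by (simp add: power_divide power_mult_distrib field_simps) (simp add: power2_eq_square algebra_simps)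
  then show ?thesis
    unfolding std_normal_density_def gauss_kernel_def
    by (simp add: mult_exp_exp power2_eq_square)
qed

lemma dsn_theta_eq:
  assumes "v > 0"
  shows "dsn_theta x \<theta> v m = 2 / sqrt v * ((x - \<theta>) / v * std_normal_density ((x - \<theta>) / sqrt v)
           * std_normal_cdf (m * (x - \<theta>) / sqrt v)
         - m / sqrt v * std_normal_density ((x - \<theta>) / sqrt v) * std_normal_density (m * (x - \<theta>) / sqrt v))"
  unfolding dsn_theta_def skew_normal_def using assms
  by (intro DERIV_imp_deriv)
    (auto intro!: derivative_eq_intros DERIV_chain2[OF std_normal_density_has_real_derivative]
       DERIV_chain2[OF std_normal_cdf_has_real_derivative] simp: field_simps)

lemma dsn_v_eq:
  assumes "v > 0"
  shows "dsn_v x \<theta> v m = 1 / (v * sqrt v) * (((x - \<theta>)^2 / v - 1) * std_normal_density ((x - \<theta>) / sqrt v)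
           * std_normal_cdf (m * (x - \<theta>) / sqrt v)
         - m * (x - \<theta>) / sqrt v * std_normal_density ((x - \<theta>) / sqrt v) * std_normal_density (m * (x - \<theta>) / sqrt v))"
proof -
  define s where "s = sqrt v"
  have "s > 0" "v = s^2"
    using assms by (simp_all add: s_def)
  then show ?thesis
    unfolding dsn_v_def skew_normal_def s_def[symmetric]
    by (intro DERIV_imp_deriv)
      (auto intro!: derivative_eq_intros DERIV_chain2[OF std_normal_density_has_real_derivative]
         DERIV_chain2[OF std_normal_cdf_has_real_derivative] simp: field_simps power2_eq_square)
qed

lemma dsn_m_eq:
  assumes "v > 0"
  shows "dsn_m x \<theta> v m = 2 / sqrt v * std_normal_density ((x - \<theta>) / sqrt v)
           * std_normal_density (m * (x - \<theta>) / sqrt v) * ((x - \<theta>) / sqrt v)"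
proof -
  define s where "s = sqrt v"
  have "s > 0"
    using assms by (simp add: s_def)
  then show ?thesis
    unfolding dsn_m_def skew_normal_def s_def[symmetric]
    by (intro DERIV_imp_deriv)
      (auto intro!: derivative_eq_intros DERIV_chain2[OF std_normal_cdf_has_real_derivative]
         simp: field_simps)
qed

definition skew_cdf_poly :: "real \<Rightarrow> real \<Rightarrow> real \<Rightarrow> real \<Rightarrow> real poly" where
  "skew_cdf_poly a b c v = smult (1 / (sqrt (2 * pi) * sqrt v)) [:2 * a - c / v, 2 * b / v, c / v^2:]"

definition skew_pdf_poly :: "real \<Rightarrow> real \<Rightarrow> real \<Rightarrow> real \<Rightarrow> real \<Rightarrow> real poly" where
  "skew_pdf_poly b c d v m = smult (1 / (2 * pi)) [:- 2 * b * m / v, 2 * d / v - c * m / v^2:]"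

lemma skew_normal_combination_eq:
  assumes "v > 0"
  shows "a * skew_normal x \<theta> v m + b * dsn_theta x \<theta> v m + c * dsn_v x \<theta> v m + d * dsn_m x \<theta> v m
    = poly (skew_cdf_poly a b c v) (x - \<theta>) * std_normal_cdf (m * (x - \<theta>) / sqrt v) * gauss_kernel (v, \<theta>) x
      + poly (skew_pdf_poly b c d v m) (x - \<theta>) * gauss_kernel (v / (1 + m^2), \<theta>) x"
proof -
  define s t where "s = sqrt v" and "t = x - \<theta>"
  define P Q R where "P = std_normal_density (t / s)" and "Q = std_normal_density (m * t / s)"
    and "R = std_normal_cdf (m * t / s)"
  have s: "s > 0" "v = s^2"
    using assms by (simp_all add: s_def)
  have "a * skew_normal x \<theta> v m + b * dsn_theta x \<theta> v m + c * dsn_v x \<theta> v m + d * dsn_m x \<theta> v m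
      = R * P * (2 * a / s + 2 * b * t / (s * v) + c * (t^2 / v - 1) / (v * s))
        + (P * Q) * (- 2 * b * m / v - c * m * t / v^2 + 2 * d * t / v)"
    unfolding skew_normal_def dsn_theta_eq[OF assms] dsn_v_eq[OF assms] dsn_m_eq[OF assms]
      s_def[symmetric] t_def[symmetric] P_def[symmetric] Q_def[symmetric] R_def[symmetric]
    using s by (simp add: field_simps) (simp add: algebra_simps eval_nat_numeral)
  also have "P * Q = gauss_kernel (v / (1 + m^2), \<theta>) x / (2 * pi)"
    unfolding P_def Q_def s_def t_def by (rule std_normal_density_scaled_product[OF assms])
  also have "P = gauss_kernel (v, \<theta>) x / sqrt (2 * pi)"
    unfolding P_def s_def t_def by (rule std_normal_density_scaled[OF assms])
  also have "2 * a / s + 2 * b * t / (s * v) + c * (t^2 / v - 1) / (v * s) = sqrt (2 * pi) * poly (skew_cdf_poly a b c v) t"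
    unfolding skew_cdf_poly_def s_def[symmetric] using s by (simp add: field_simps power2_eq_square)
  also have "- 2 * b * m / v - c * m * t / v^2 + 2 * d * t / v = 2 * pi * poly (skew_pdf_poly b c d v m) t"
    unfolding skew_pdf_poly_def using s by (simp add: field_simps power2_eq_square)
  finally show ?thesis
    unfolding R_def s_def t_def by simp
qed

lemma std_normal_cdf_times_gauss_kernel:
  assumes "v > 0" "m \<noteq> 0"
  shows "std_normal_cdf (m * (x - \<theta>) / sqrt v) * gauss_kernel (v, \<theta>) x
    = (if m > 0 then 1 else 0) * gauss_kernel (v, \<theta>) x
      - sgn m / sqrt (2 * pi) * mills_ratio (\<bar>m\<bar> / sqrt v * (x - \<theta>)) * gauss_kernel (v / (1 + m^2), \<theta>) x"
proof -
  define y where "y = \<bar>m\<bar> / sqrt v * (x - \<theta>)"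
  have "gauss_kernel (v, \<theta>) x * std_normal_density y
      = sqrt (2 * pi) * (std_normal_density ((x - \<theta>) / sqrt v) * std_normal_density (\<bar>m\<bar> * (x - \<theta>) / sqrt v))"
    using std_normal_density_scaled[OF assms(1), of x \<theta>] by (simp add: y_def)
  also have "\<dots> = sqrt (2 * pi) * (gauss_kernel (v / (1 + m^2), \<theta>) x / (2 * pi))"
    using std_normal_density_scaled_product[OF assms(1), of x \<theta> "\<bar>m\<bar>"] by simp
  also have "\<dots> = gauss_kernel (v / (1 + m^2), \<theta>) x / sqrt (2 * pi)"
    by (simp add: field_simps)
  finally have kernel: "gauss_kernel (v, \<theta>) x * std_normal_density y = gauss_kernel (v / (1 + m^2), \<theta>) x / sqrt (2 * pi)" .
  have tail: "std_normal_cdf y = 1 - mills_ratio y * std_normal_density y"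
    using normal_density_pos[of 1 0 y] by (simp add: mills_ratio_def)
  show ?thesis
  proof (cases "m > 0")
    case True
    then have "m * (x - \<theta>) / sqrt v = y"
      by (simp add: y_def)
    moreover have "std_normal_cdf y * gauss_kernel (v, \<theta>) x
        = gauss_kernel (v, \<theta>) x - mills_ratio y * (gauss_kernel (v, \<theta>) x * std_normal_density y)"
      by (simp add: tail algebra_simps)
    ultimately show ?thesis
      using True by (simp add: y_def[symmetric] kernel)
  next
    case False
    with assms have "m * (x - \<theta>) / sqrt v = - y" "m < 0"
      by (auto simp: y_def)
    moreover have "(1 - std_normal_cdf y) * gauss_kernel (v, \<theta>) x
        = mills_ratio y * (gauss_kernel (v, \<theta>) x * std_normal_density y)"
      by (simp add: tail algebra_simps)
    ultimately show ?thesis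
      by (simp add: y_def[symmetric] std_normal_cdf_minus kernel)
  qed
qed

lemma skew_normal_combination_mills_eq:
  assumes "v > 0" "m \<noteq> 0"
  shows "a * skew_normal x \<theta> v m + b * dsn_theta x \<theta> v m + c * dsn_v x \<theta> v m + d * dsn_m x \<theta> v m
    = poly (smult (if m > 0 then 1 else 0) (pcompose (skew_cdf_poly a b c v) [:- \<theta>, 1:])) x * gauss_kernel (v, \<theta>) x
      + poly (pcompose (skew_pdf_poly b c d v m) [:- \<theta>, 1:]) x * gauss_kernel (v / (1 + m^2), \<theta>) x
      + mills_term mills_ratio (smult (- sgn m / sqrt (2 * pi)) (skew_cdf_poly a b c v)) (\<bar>m\<bar> / sqrt v)
          (v / (1 + m^2), \<theta>) x"
  unfolding skew_normal_combination_eq[OF assms(1)] mult.assoc std_normal_cdf_times_gauss_kernel[OF assms]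
  by (simp add: mills_term_def poly_pcompose algebra_simps)

section \<open>Linear independence of the skew-normal family\<close>

lemma continuous_on_std_normal_cdf [continuous_intros]:
  "continuous_on S f \<Longrightarrow> continuous_on S (\<lambda>x. std_normal_cdf (f x))"
  by (rule continuous_on_compose2[of UNIV])
    (auto intro: continuous_at_imp_continuous_on DERIV_isCont std_normal_cdf_has_real_derivative)

lemma continuous_zero_if_AE_zero:
  fixes f :: "real \<Rightarrow> real"
  assumes cont: "continuous_on UNIV f" and ae: "AE x in lborel. f x = 0"
  shows "f x = 0"
proof (rule ccontr)
  assume "f x \<noteq> 0"
  then obtain e where e: "e > 0" "\<And>y. dist x y < e \<Longrightarrow> f y \<noteq> 0"
    using continuous_on_avoid[OF cont, of x 0] by auto
  from ae obtain N where N: "{y \<in> space lborel. f y \<noteq> 0} \<subseteq> N" "emeasure lborel N = 0" "N \<in> sets lborel"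
    by (auto elim: AE_E)
  have "{x - e <..< x + e} \<subseteq> N"
  proof
    fix y assume "y \<in> {x - e <..< x + e}"
    then have "f y \<noteq> 0"
      using e(2)[of y] by (simp add: dist_real_def abs_diff_less_iff)
    with N(1) show "y \<in> N"
      by auto
  qed
  then have "emeasure lborel {x - e <..< x + e} \<le> emeasure lborel N"
    by (rule emeasure_mono) (use N in auto)
  with N e show False
    by (simp add: ennreal_le_iff2)
qed

lemma sum_poly_group:
  assumes "finite I" "finite S" "a ` I \<subseteq> S"
  shows "(\<Sum>i\<in>I. poly (F i) x * h (a i)) = (\<Sum>p\<in>S. poly (\<Sum>i\<in>{i\<in>I. a i = p}. F i) x * h p)"
proof -
  have "(\<Sum>p\<in>S. poly (\<Sum>i\<in>{i\<in>I. a i = p}. F i) x * h p)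
      = (\<Sum>p\<in>S. \<Sum>i\<in>{i\<in>I. a i = p}. poly (F i) x * h p)"
    by (simp add: poly_sum sum_distrib_right)
  also have "\<dots> = (\<Sum>p\<in>S. \<Sum>i\<in>{i\<in>I. a i = p}. poly (F i) x * h (a i))"
    by (intro sum.cong) auto
  also have "\<dots> = (\<Sum>i\<in>I. poly (F i) x * h (a i))"
    by (rule sum.group[OF assms])
  finally show ?thesis ..
qed

lemma skew_cdf_poly_eq_0_iff:
  "v > 0 \<Longrightarrow> skew_cdf_poly a b c v = 0 \<longleftrightarrow> a = 0 \<and> b = 0 \<and> c = 0"
  by (auto simp: skew_cdf_poly_def)

lemma skew_pdf_poly_eq_0_iff:
  "v > 0 \<Longrightarrow> skew_pdf_poly 0 0 d v m = 0 \<longleftrightarrow> d = 0"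
  by (auto simp: skew_pdf_poly_def)

lemma continuous_on_gauss_kernel [continuous_intros]:
  "continuous_on S f \<Longrightarrow> continuous_on S (\<lambda>x. gauss_kernel p (f x))"
  unfolding gauss_kernel_def divide_inverse by (intro continuous_intros)

definition skew_normal_lincomb ::
    "nat \<Rightarrow> (nat \<Rightarrow> real) \<Rightarrow> (nat \<Rightarrow> real) \<Rightarrow> (nat \<Rightarrow> real) \<Rightarrow> (nat \<Rightarrow> real) \<Rightarrow> (nat \<Rightarrow> real)
       \<Rightarrow> (nat \<Rightarrow> real) \<Rightarrow> (nat \<Rightarrow> real) \<Rightarrow> real \<Rightarrow> real" where
  "skew_normal_lincomb k \<theta> v m a b c d x =
     (\<Sum>j<k. a j * skew_normal x (\<theta> j) (v j) (m j) + b j * dsn_theta x (\<theta> j) (v j) (m j)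
            + c j * dsn_v x (\<theta> j) (v j) (m j) + d j * dsn_m x (\<theta> j) (v j) (m j))"

lemma continuous_on_skew_normal_lincomb:
  assumes "\<And>j. j < k \<Longrightarrow> v j > 0"
  shows "continuous_on UNIV (skew_normal_lincomb k \<theta> v m a b c d)"
proof -
  have "skew_normal_lincomb k \<theta> v m a b c d = (\<lambda>x. \<Sum>j<k.
          poly (skew_cdf_poly (a j) (b j) (c j) (v j)) (x - \<theta> j) * std_normal_cdf (m j * (x - \<theta> j) / sqrt (v j))
            * gauss_kernel (v j, \<theta> j) x
          + poly (skew_pdf_poly (b j) (c j) (d j) (v j) (m j)) (x - \<theta> j) * gauss_kernel (v j / (1 + (m j)^2), \<theta> j) x)"
    unfolding skew_normal_lincomb_def using assms by (intro ext sum.cong refl skew_normal_combination_eq) auto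
  then show ?thesis
    by (simp add: divide_inverse continuous_intros)
qed

lemma skew_normal_lincomb_zero_imp_coeffs_zero:
  fixes \<theta> v m a b c d :: "nat \<Rightarrow> real"
  assumes vpos: "\<And>j. j < k \<Longrightarrow> v j > 0" and mnz: "\<And>j. j < k \<Longrightarrow> m j \<noteq> 0"
    and inj: "inj_on (\<lambda>j. (v j / (1 + (m j)^2), \<theta> j)) {..<k}"
    and zero: "\<And>x. skew_normal_lincomb k \<theta> v m a b c d x = 0"
  shows "\<forall>j<k. a j = 0 \<and> b j = 0 \<and> c j = 0 \<and> d j = 0"
proof -
  define A B where "A j = skew_cdf_poly (a j) (b j) (c j) (v j)"
    and "B j = skew_pdf_poly (b j) (c j) (d j) (v j) (m j)" for j
  define pv pw where "pv j = (v j, \<theta> j)" and "pw j = (v j / (1 + (m j)^2), \<theta> j)" for j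
  define F G where "F j = smult (if m j > 0 then 1 else 0) (pcompose (A j) [:- \<theta> j, 1:])"
    and "G j = pcompose (B j) [:- \<theta> j, 1:]" for j
  define T \<alpha> where "T j = smult (- sgn (m j) / sqrt (2 * pi)) (A j)" and "\<alpha> j = \<bar>m j\<bar> / sqrt (v j)" for j
  define S where "S = pv ` {..<k} \<union> pw ` {..<k}"
  define C where "C p = (\<Sum>i\<in>{i\<in>{..<k}. pv i = p}. F i) + (\<Sum>i\<in>{i\<in>{..<k}. pw i = p}. G i)" for p
  have decomp: "skew_normal_lincomb k \<theta> v m a b c d x
      = (\<Sum>j<k. poly (F j) x * gauss_kernel (pv j) x) + (\<Sum>j<k. poly (G j) x * gauss_kernel (pw j) x)
        + (\<Sum>j<k. mills_term mills_ratio (T j) (\<alpha> j) (pw j) x)" for x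
    unfolding skew_normal_lincomb_def sum.distrib[symmetric]
    using vpos mnz by (intro sum.cong refl)
      (simp add: skew_normal_combination_mills_eq F_def G_def T_def \<alpha>_def A_def B_def pv_def pw_def)
  have regroup: "(\<Sum>j<k. poly (F j) x * gauss_kernel (pv j) x) + (\<Sum>j<k. poly (G j) x * gauss_kernel (pw j) x)
      = (\<Sum>p\<in>S. poly (C p) x * gauss_kernel p x)" for x
  proof -
    have "(\<Sum>j<k. poly (F j) x * gauss_kernel (pv j) x)
        = (\<Sum>p\<in>S. poly (\<Sum>i\<in>{i\<in>{..<k}. pv i = p}. F i) x * gauss_kernel p x)"
      by (rule sum_poly_group) (auto simp: S_def)
    moreover have "(\<Sum>j<k. poly (G j) x * gauss_kernel (pw j) x)
        = (\<Sum>p\<in>S. poly (\<Sum>i\<in>{i\<in>{..<k}. pw i = p}. G i) x * gauss_kernel p x)"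
      by (rule sum_poly_group) (auto simp: S_def)
    ultimately show ?thesis
      by (simp add: C_def sum.distrib[symmetric] distrib_right)
  qed
  have "\<forall>\<^sub>F x in at_top. (\<Sum>p\<in>S. poly (C p) x * gauss_kernel p x)
                           + (\<Sum>j\<in>{..<k}. mills_term mills_ratio (T j) (\<alpha> j) (pw j) x) = 0"
    using zero decomp regroup by (intro always_eventually) metis
  moreover have "inj_on pw {..<k}"
    using inj by (simp add: pw_def[abs_def])
  ultimately have "(\<forall>p\<in>S. C p = 0) \<and> (\<forall>j\<in>{..<k}. T j = 0)"
    using vpos mnz
    by (intro gauss_mills_combination_unique[where \<rho> = mills_ratio and u = pw])
      (auto simp: S_def pv_def pw_def \<alpha>_def T_def A_def tendsto_mills_ratio_expansion add_pos_nonneg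
        skew_cdf_poly_def degree_add_le)
  then have C0: "\<forall>p\<in>S. C p = 0" and T0: "\<forall>j\<in>{..<k}. T j = 0"
    by auto
  have abc: "a j = 0 \<and> b j = 0 \<and> c j = 0" if "j < k" for j
  proof -
    have "smult (- sgn (m j) / sqrt (2 * pi)) (A j) = 0"
      using T0 that by (simp add: T_def)
    then show ?thesis
      using vpos[OF that] mnz[OF that] by (simp add: A_def sgn_eq_0_iff skew_cdf_poly_eq_0_iff)
  qed
  moreover have "d j = 0" if "j < k" for j
  proof -
    have "{i \<in> {..<k}. pw i = pw j} = {j}"
      using inj_on_eq_iff[OF inj] that by (auto simp: pw_def)
    moreover have "F i = 0" if "i < k" for i
      using abc[OF that] by (simp add: F_def A_def skew_cdf_poly_def)
    ultimately have "C (pw j) = G j"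
      unfolding C_def by simp
    moreover have "pw j \<in> S"
      unfolding S_def using that by simp
    ultimately have "pcompose (B j) [:- \<theta> j, 1:] = 0"
      using C0 by (simp add: G_def)
    then show "d j = 0"
      using abc[OF that] vpos[OF that] by (auto simp: B_def skew_pdf_poly_eq_0_iff dest!: pcompose_eq_0)
  qed
  ultimately show ?thesis
    by blast
qed

lemma skew_normal_lincomb_supported:
  assumes "I \<subseteq> {..<k}" and "\<And>i. i < k \<Longrightarrow> i \<notin> I \<Longrightarrow> a i = 0 \<and> b i = 0 \<and> c i = 0 \<and> d i = 0"
  shows "skew_normal_lincomb k \<theta> v m a b c d x =
     (\<Sum>i\<in>I. a i * skew_normal x (\<theta> i) (v i) (m i) + b i * dsn_theta x (\<theta> i) (v i) (m i)
            + c i * dsn_v x (\<theta> i) (v i) (m i) + d i * dsn_m x (\<theta> i) (v i) (m i))"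
  unfolding skew_normal_lincomb_def using assms by (intro sum.mono_neutral_right) auto

lemma skew_normal_lincomb_vanishes_if_m_zero:
  assumes "j < k" "m j = 0" "v j > 0"
  shows "\<exists>a b c d. (\<exists>j<k. a j \<noteq> 0 \<or> b j \<noteq> 0 \<or> c j \<noteq> 0 \<or> d j \<noteq> 0)
                   \<and> (\<forall>x. skew_normal_lincomb k \<theta> v m a b c d x = 0)"
proof -
  \<comment> \<open>for \<open>m = 0\<close>, both \<open>\<partial>f/\<partial>\<theta>\<close> and \<open>\<partial>f/\<partial>m\<close> are multiples of \<open>(x - \<theta>) \<phi>((x - \<theta>)/\<sigma>)\<close>\<close>
  define b d where "b i = (if i = j then std_normal_density 0 * sqrt (v j) else 0)"
    and "d i = (if i = j then - std_normal_cdf 0 else 0)" for i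
  have "skew_normal_lincomb k \<theta> v m (\<lambda>_. 0) b (\<lambda>_. 0) d x = 0" for x
    using assms by (subst skew_normal_lincomb_supported[where I = "{j}"])
      (auto simp: b_def d_def dsn_theta_eq dsn_m_eq field_simps)
  moreover have "b j \<noteq> 0"
    using assms normal_density_pos[of 1 0 0] by (simp add: b_def)
  ultimately show ?thesis
    using assms(1) by blast
qed

lemma dsn_m_eq_gauss_kernel:
  assumes "v > 0"
  shows "v * dsn_m x \<theta> v m = (x - \<theta>) / pi * gauss_kernel (v / (1 + m^2), \<theta>) x"
proof -
  have "v * dsn_m x \<theta> v m
      = 2 * (x - \<theta>) * (std_normal_density ((x - \<theta>) / sqrt v) * std_normal_density (m * (x - \<theta>) / sqrt v))"
    using assms by (simp add: dsn_m_eq field_simps)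
  also have "std_normal_density ((x - \<theta>) / sqrt v) * std_normal_density (m * (x - \<theta>) / sqrt v)
      = gauss_kernel (v / (1 + m^2), \<theta>) x / (2 * pi)"
    by (rule std_normal_density_scaled_product[OF assms])
  finally show ?thesis
    by (simp add: field_simps)
qed

lemma divide_one_plus_square_eq_iff:
  fixes a b x y :: real
  shows "a / (1 + x^2) = b / (1 + y^2) \<longleftrightarrow> a * (1 + y^2) = b * (1 + x^2)"
proof -
  have "1 + x^2 > 0" "1 + y^2 > 0"
    by (simp_all add: add_pos_nonneg)
  then show ?thesis
    by (simp add: frac_eq_eq mult.commute)
qed

lemma skew_normal_lincomb_vanishes_if_same_kernel:
  assumes "i < k" "j < k" "i \<noteq> j" "\<theta> i = \<theta> j" "v i * (1 + (m j)^2) = v j * (1 + (m i)^2)"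
    and "v i > 0" "v j > 0"
  shows "\<exists>a b c d. (\<exists>j<k. a j \<noteq> 0 \<or> b j \<noteq> 0 \<or> c j \<noteq> 0 \<or> d j \<noteq> 0)
                   \<and> (\<forall>x. skew_normal_lincomb k \<theta> v m a b c d x = 0)"
proof -
  define d where "d l = (if l = i then v i else if l = j then - v j else 0)" for l
  have "v i / (1 + (m i)^2) = v j / (1 + (m j)^2)"
    using assms(5) by (simp add: divide_one_plus_square_eq_iff)
  then have "skew_normal_lincomb k \<theta> v m (\<lambda>_. 0) (\<lambda>_. 0) (\<lambda>_. 0) d x = 0" for x
    using assms by (subst skew_normal_lincomb_supported[where I = "{i, j}"])
      (auto simp: d_def dsn_m_eq_gauss_kernel)
  moreover have "d i \<noteq> 0"
    using assms by (simp add: d_def)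
  ultimately show ?thesis
    using assms(1) by blast
qed

lemma skew_normal_lincomb_nontrivial_zero_iff:
  fixes \<theta> v m :: "nat \<Rightarrow> real"
  assumes vpos: "\<And>j. j < k \<Longrightarrow> v j > 0"
  shows "(\<exists>a b c d. (\<exists>j<k. a j \<noteq> 0 \<or> b j \<noteq> 0 \<or> c j \<noteq> 0 \<or> d j \<noteq> 0)
                     \<and> (\<forall>x. skew_normal_lincomb k \<theta> v m a b c d x = 0))
         \<longleftrightarrow> (\<exists>j<k. m j = 0)
             \<or> (\<exists>i<k. \<exists>j<k. i \<noteq> j \<and> \<theta> i = \<theta> j \<and> v i * (1 + (m j)^2) = v j * (1 + (m i)^2))"
    (is "?dependent \<longleftrightarrow> ?m_zero \<or> ?same_kernel")
proof
  assume ?dependent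
  then obtain a b c d where nontrivial: "\<exists>j<k. a j \<noteq> 0 \<or> b j \<noteq> 0 \<or> c j \<noteq> 0 \<or> d j \<noteq> 0"
    and zero: "\<And>x. skew_normal_lincomb k \<theta> v m a b c d x = 0"
    by blast
  show "?m_zero \<or> ?same_kernel"
  proof (rule ccontr)
    assume "\<not> (?m_zero \<or> ?same_kernel)"
    then have "\<And>j. j < k \<Longrightarrow> m j \<noteq> 0" and "inj_on (\<lambda>j. (v j / (1 + (m j)^2), \<theta> j)) {..<k}"
      by (auto simp: inj_on_def divide_one_plus_square_eq_iff)
    from skew_normal_lincomb_zero_imp_coeffs_zero[OF vpos this zero] nontrivial show False
      by blast
  qed
next
  assume "?m_zero \<or> ?same_kernel"
  then show ?dependent
  proof
    assume ?m_zero
    then obtain j where j: "j < k" "m j = 0"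
      by blast
    show ?dependent
      using skew_normal_lincomb_vanishes_if_m_zero[where m = m and v = v, OF j vpos[OF j(1)]] .
  next
    assume ?same_kernel
    then obtain i j where ij: "i < k" "j < k" "i \<noteq> j" "\<theta> i = \<theta> j"
      "v i * (1 + (m j)^2) = v j * (1 + (m i)^2)"
      by blast
    show ?dependent
      using skew_normal_lincomb_vanishes_if_same_kernel[where m = m and v = v and \<theta> = \<theta>, OF ij vpos[OF ij(1)] vpos[OF ij(2)]] .
  qed
qed

theorem lemma4p1:
  fixes k :: nat and \<theta> v m :: "nat \<Rightarrow> real"
  assumes distinct: "inj_on (\<lambda>j. (\<theta> j, v j, m j)) {..<k}"
    and vpos: "\<And>j. j < k \<Longrightarrow> v j > 0"
  shows "(\<exists>a b c d :: nat \<Rightarrow> real.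
            (\<exists>j<k. a j \<noteq> 0 \<or> b j \<noteq> 0 \<or> c j \<noteq> 0 \<or> d j \<noteq> 0) \<and>
            (AE x in lborel. (\<Sum>j<k. a j * skew_normal x (\<theta> j) (v j) (m j)
                                  + b j * dsn_theta x (\<theta> j) (v j) (m j)
                                  + c j * dsn_v x (\<theta> j) (v j) (m j)
                                  + d j * dsn_m x (\<theta> j) (v j) (m j)) = 0))
         \<longleftrightarrow>
         ((\<Prod>j<k. m j) = 0 \<or>
          (\<Prod>(i, j) \<in> {(i, j). i < k \<and> j < k \<and> i \<noteq> j}.
             (\<theta> i - \<theta> j)\<^sup>2 + (v i * (1 + (m j)\<^sup>2) - v j * (1 + (m i)\<^sup>2))\<^sup>2) = 0)"
proof -
  have "finite {(i, j). i < k \<and> j < k \<and> i \<noteq> j}"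
    by (rule finite_subset[of _ "{..<k} \<times> {..<k}"]) auto
  then have P2: "(\<Prod>(i, j) \<in> {(i, j). i < k \<and> j < k \<and> i \<noteq> j}.
                (\<theta> i - \<theta> j)\<^sup>2 + (v i * (1 + (m j)\<^sup>2) - v j * (1 + (m i)\<^sup>2))\<^sup>2) = 0
      \<longleftrightarrow> (\<exists>i<k. \<exists>j<k. i \<noteq> j \<and> \<theta> i = \<theta> j \<and> v i * (1 + (m j)^2) = v j * (1 + (m i)^2))"
    by auto
  have AE: "(AE x in lborel. skew_normal_lincomb k \<theta> v m a b c d x = 0)
      \<longleftrightarrow> (\<forall>x. skew_normal_lincomb k \<theta> v m a b c d x = 0)" for a b c d
  proof
    assume "AE x in lborel. skew_normal_lincomb k \<theta> v m a b c d x = 0"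
    then show "\<forall>x. skew_normal_lincomb k \<theta> v m a b c d x = 0"
      by (intro allI continuous_zero_if_AE_zero[OF continuous_on_skew_normal_lincomb[OF vpos]])
  qed simp
  have P1: "(\<Prod>j<k. m j) = 0 \<longleftrightarrow> (\<exists>j<k. m j = 0)"
    by (simp add: Bex_def)
  show ?thesis
    unfolding skew_normal_lincomb_def[symmetric] AE P1 P2
    by (rule skew_normal_lincomb_nontrivial_zero_iff[OF vpos])
qed

end
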